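(* For every decorated tree $\mathcal{T}$, the integer $M(\mathcal{T}) + F(\mathcal{T})$ is even.
   Context: A graph is a pair $(X_0,X_1)$ of finite sets such that each element of $X_1$ (an edge) is a $2$-element subset of $X_0$; elements of $X_0$ are called cells. The valency $\delta_x$ of a cell $x$ is the number of edges containing $x$. A path is a tuple $(x_0,\dots,x_n)$ ($n\ge 0$) of cells such that $\{x_i,x_{i+1}\}$ is an edge for each $i<n$ and these $n$ edges are pairwise distinct; a cell (resp. edge) is in the path if it is one of the $x_i$ (resp. one of the $\{x_i,x_{i+1}\}$). The graph is a tree if for any cells $x,y$ there is a unique path from $x$ to $y$, denoted $\gamma_{x,y}$. A decorated tree is a $5$-tuple $\mathcal{T}=(V,A,E,f,q)$ where $V$ (vertices) and $A$ (arrows) are finite disjoint sets, $(V\cup A,E)$ is a tree, every arrow has valency $1$, $f:A\to\mathbb{Z}$ is a map, $q$ assigns an integer $q(e,x)$ (the decoration of $e$ near $x$) to each pair $(e,x)$ with $e\in E$, $x\in e$, such that $q(e,\alpha)=1$ whenever $\alpha\in A$, and for every $v\in V$ and distinct edges $e,e'$ containing $v$, $\gcd(q(e,v),q(e',v))=1$. Let $A_0=\{\alpha\in A: f(\alpha)=0\}$. For $x\in V\cup A$ and an edge $e\ni x$, $Q(e,x)=\prod q(e',x)$ over edges $e'\neq e$ containing $x$ (empty products equal $1$). An edge $\varepsilon$ is incident to a path $\gamma$ if $\varepsilon$ is not in $\gamma$ but contains some cell $u$ of $\gamma$; then $q(\varepsilon,\gamma):=q(\varepsilon,u)$. For $v\in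 V\cup A$ and $\alpha\in A$ with $v\ne\alpha$, $x_{v,\alpha}=f(\alpha)\prod_\varepsilon q(\varepsilon,\gamma_{v,\alpha})$ over all edges $\varepsilon$ incident to $\gamma_{v,\alpha}$, and $\hat x_{v,\alpha}$ is the same expression with the product restricted to those $\varepsilon$ not containing $v$. For $v\in V\cup A_0$, $N_v=\sum_{\alpha\in A\setminus A_0} x_{v,\alpha}$, and $M(\mathcal{T})=-\sum_{v\in V\cup A_0}N_v(\delta_v-2)$. For $u\in V\cup A$ and an edge $e\ni u$, $p(u,e)=\sum \hat x_{u,\alpha}$ over $\alpha\in A\setminus A_0$ such that $e$ is in $\gamma_{u,\alpha}$. For $\alpha\in A\setminus A_0$ with unique incident edge $e_\alpha$, $F(\alpha)=\gcd(f(\alpha),p(\alpha,e_\alpha))\ge 0$, and $F(\mathcal{T})=\sum_{\alpha\in A\setminus A_0}F(\alpha)$. *)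

theory Defs
  imports Main
begin

definition is_graph :: "'a set \<Rightarrow> 'a set set \<Rightarrow> bool" where
  "is_graph X0 X1 \<longleftrightarrow> finite X0 \<and> finite X1 \<and> (\<forall>e\<in>X1. e \<subseteq> X0 \<and> card e = 2)"

definition valency :: "'a set set \<Rightarrow> 'a \<Rightarrow> nat" where
  "valency X1 x = card {e \<in> X1. x \<in> e}"

definition path_edge_list :: "'a list \<Rightarrow> 'a set list" where
  "path_edge_list xs = map (\<lambda>i. {xs ! i, xs ! Suc i}) [0..<length xs - 1]"

definition path_edges :: "'a list \<Rightarrow> 'a set set" where
  "path_edges xs = set (path_edge_list xs)"

definition is_path :: "'a set \<Rightarrow> 'a set set \<Rightarrow> 'a list \<Rightarrow> bool" where
  "is_path X0 X1 xs \<longleftrightarrow> xs \<noteq> [] \<and> set xs \<subseteq> X0 \<and> path_edges xs \<subseteq> X1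
     \<and> distinct (path_edge_list xs)"

definition is_tree :: "'a set \<Rightarrow> 'a set set \<Rightarrow> bool" where
  "is_tree X0 X1 \<longleftrightarrow> is_graph X0 X1 \<and>
     (\<forall>x\<in>X0. \<forall>y\<in>X0. \<exists>!xs. is_path X0 X1 xs \<and> hd xs = x \<and> last xs = y)"

definition tpath :: "'a set \<Rightarrow> 'a set set \<Rightarrow> 'a \<Rightarrow> 'a \<Rightarrow> 'a list" where
  "tpath X0 X1 x y = (THE xs. is_path X0 X1 xs \<and> hd xs = x \<and> last xs = y)"

definition decorated_tree ::
  "'a set \<Rightarrow> 'a set \<Rightarrow> 'a set set \<Rightarrow> ('a \<Rightarrow> int) \<Rightarrow> ('a set \<Rightarrow> 'a \<Rightarrow> int) \<Rightarrow> bool" where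
  "decorated_tree V A E f q \<longleftrightarrow>
     finite V \<and> finite A \<and> V \<inter> A = {} \<and> is_tree (V \<union> A) E \<and>
     (\<forall>\<alpha>\<in>A. valency E \<alpha> = 1) \<and>
     (\<forall>e\<in>E. \<forall>\<alpha>\<in>A. \<alpha> \<in> e \<longrightarrow> q e \<alpha> = 1) \<and>
     (\<forall>v\<in>V. \<forall>e\<in>E. \<forall>e'\<in>E. v \<in> e \<and> v \<in> e' \<and> e \<noteq> e' \<longrightarrow> gcd (q e v) (q e' v) = 1)"

definition A0 :: "'a set \<Rightarrow> ('a \<Rightarrow> int) \<Rightarrow> 'a set" where
  "A0 A f = {\<alpha> \<in> A. f \<alpha> = 0}"

definition incident_edges :: "'a set set \<Rightarrow> 'a list \<Rightarrow> 'a set set" where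
  "incident_edges E \<gamma> = {\<epsilon> \<in> E. \<epsilon> \<notin> path_edges \<gamma> \<and> (\<exists>u\<in>set \<gamma>. u \<in> \<epsilon>)}"

text \<open>q(\<epsilon>,\<gamma>) := q(\<epsilon>,u) for the cell u of \<gamma> in \<epsilon> (unique in a tree).\<close>
definition q_path :: "('a set \<Rightarrow> 'a \<Rightarrow> int) \<Rightarrow> 'a set \<Rightarrow> 'a list \<Rightarrow> int" where
  "q_path q \<epsilon> \<gamma> = q \<epsilon> (THE u. u \<in> set \<gamma> \<and> u \<in> \<epsilon>)"

definition xval :: "'a set \<Rightarrow> 'a set \<Rightarrow> 'a set set \<Rightarrow> ('a \<Rightarrow> int) \<Rightarrow> ('a set \<Rightarrow> 'a \<Rightarrow> int)
    \<Rightarrow> 'a \<Rightarrow> 'a \<Rightarrow> int" where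
  "xval V A E f q v \<alpha> = (let \<gamma> = tpath (V \<union> A) E v \<alpha> in
     f \<alpha> * (\<Prod>\<epsilon>\<in>incident_edges E \<gamma>. q_path q \<epsilon> \<gamma>))"

definition xhat :: "'a set \<Rightarrow> 'a set \<Rightarrow> 'a set set \<Rightarrow> ('a \<Rightarrow> int) \<Rightarrow> ('a set \<Rightarrow> 'a \<Rightarrow> int)
    \<Rightarrow> 'a \<Rightarrow> 'a \<Rightarrow> int" where
  "xhat V A E f q v \<alpha> = (let \<gamma> = tpath (V \<union> A) E v \<alpha> in
     f \<alpha> * (\<Prod>\<epsilon>\<in>{\<epsilon> \<in> incident_edges E \<gamma>. v \<notin> \<epsilon>}. q_path q \<epsilon> \<gamma>))"

definition Nval :: "'a set \<Rightarrow> 'a set \<Rightarrow> 'a set set \<Rightarrow> ('a \<Rightarrow> int) \<Rightarrow> ('a set \<Rightarrow> 'a \<Rightarrow> int)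
    \<Rightarrow> 'a \<Rightarrow> int" where
  "Nval V A E f q v = (\<Sum>\<alpha>\<in>A - A0 A f. xval V A E f q v \<alpha>)"

definition Mval :: "'a set \<Rightarrow> 'a set \<Rightarrow> 'a set set \<Rightarrow> ('a \<Rightarrow> int) \<Rightarrow> ('a set \<Rightarrow> 'a \<Rightarrow> int) \<Rightarrow> int" where
  "Mval V A E f q = - (\<Sum>v\<in>V \<union> A0 A f. Nval V A E f q v * (int (valency E v) - 2))"

definition pval :: "'a set \<Rightarrow> 'a set \<Rightarrow> 'a set set \<Rightarrow> ('a \<Rightarrow> int) \<Rightarrow> ('a set \<Rightarrow> 'a \<Rightarrow> int)
    \<Rightarrow> 'a \<Rightarrow> 'a set \<Rightarrow> int" where
  "pval V A E f q u e = (\<Sum>\<alpha>\<in>{\<alpha> \<in> A - A0 A f. e \<in> path_edges (tpath (V \<union> A) E u \<alpha>)}.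
       xhat V A E f q u \<alpha>)"

definition arrow_edge :: "'a set set \<Rightarrow> 'a \<Rightarrow> 'a set" where
  "arrow_edge E \<alpha> = (THE e. e \<in> E \<and> \<alpha> \<in> e)"

definition Farrow :: "'a set \<Rightarrow> 'a set \<Rightarrow> 'a set set \<Rightarrow> ('a \<Rightarrow> int) \<Rightarrow> ('a set \<Rightarrow> 'a \<Rightarrow> int)
    \<Rightarrow> 'a \<Rightarrow> int" where
  "Farrow V A E f q \<alpha> = gcd (f \<alpha>) (pval V A E f q \<alpha> (arrow_edge E \<alpha>))"

definition Fval :: "'a set \<Rightarrow> 'a set \<Rightarrow> 'a set set \<Rightarrow> ('a \<Rightarrow> int) \<Rightarrow> ('a set \<Rightarrow> 'a \<Rightarrow> int) \<Rightarrow> int" where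
  "Fval V A E f q = (\<Sum>\<alpha>\<in>A - A0 A f. Farrow V A E f q \<alpha>)"

end

theory Submission
  imports Defs
begin

(* Let w(v,\<alpha>) be the product of the decorations of the edges incident to \<gamma>_{v,\<alpha>}, so that
   x_{v,\<alpha>} = f(\<alpha>) w(v,\<alpha>) and w is symmetric. For an arrow \<alpha>, w(v,\<alpha>) is odd iff every edge
   hanging off \<gamma>_{v,\<alpha>} is odd at the cell where it meets the path. Every cell carries at most
   one even decoration, and \<alpha> none, so a count at each cell of the tree rooted at \<alpha> (how many
   of its children still see only odd decorations off their paths) shows that
   \<Sum>_v \<delta>_v w(v,\<alpha>) is even; since \<delta>_\<alpha> = w(\<alpha>,\<alpha>) = 1, the sum over v \<noteq> \<alpha> is odd.
   Modulo 2, F(\<alpha>) = gcd(f(\<alpha>), p(\<alpha>,e_\<alpha>)) is f(\<alpha>) times this odd sum plus (1 + f(\<alpha>)) p(\<alpha>,e_\<alpha>).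
   Substituting, M + F reduces modulo 2 to \<Sum>_{\<alpha> \<noteq> \<beta>} (f(\<alpha>) + f(\<beta>) + f(\<alpha>) f(\<beta>)) w(\<alpha>,\<beta>),
   a symmetric function summed over ordered pairs of distinct arrows, hence even. *)

lemma path_edge_list_Cons_Cons:
  "path_edge_list (x # y # ys) = {x, y} # path_edge_list (y # ys)"
  unfolding path_edge_list_def
  by (simp add: upt_conv_Cons map_Suc_upt[symmetric] del: upt_Suc)

lemma path_edge_list_singleton [simp]: "path_edge_list [x] = []"
  unfolding path_edge_list_def by simp

lemma path_edge_list_drop: "path_edge_list (drop i xs) = drop i (path_edge_list xs)"
  unfolding path_edge_list_def
  by (rule nth_equalityI) (auto simp: add.commute)

lemma path_edge_list_rev: "path_edge_list (rev xs) = rev (path_edge_list xs)"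
  unfolding path_edge_list_def
  by (rule nth_equalityI) (auto simp: rev_nth insert_commute Suc_diff_Suc)

lemma path_edges_iff_nth:
  "e \<in> path_edges xs \<longleftrightarrow> (\<exists>i. Suc i < length xs \<and> e = {xs ! i, xs ! Suc i})"
  unfolding path_edges_def path_edge_list_def
  by (auto simp: less_diff_conv)

lemma nth_edge_in_path_edges: "Suc i < length xs \<Longrightarrow> {xs ! i, xs ! Suc i} \<in> path_edges xs"
  unfolding path_edges_iff_nth by auto

lemma path_edges_Cons_Cons:
  "path_edges (x # y # ys) = insert {x, y} (path_edges (y # ys))"
  unfolding path_edges_def by (simp add: path_edge_list_Cons_Cons)

lemma in_set_if_in_path_edge: "e \<in> path_edges xs \<Longrightarrow> u \<in> e \<Longrightarrow> u \<in> set xs"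
  unfolding path_edges_iff_nth by auto

lemma is_path_drop: "is_path C E xs \<Longrightarrow> i < length xs \<Longrightarrow> is_path C E (drop i xs)"
  unfolding is_path_def path_edges_def
  by (auto simp: path_edge_list_drop dest: in_set_dropD intro: distinct_drop)

lemma is_path_rev: "is_path C E xs \<Longrightarrow> is_path C E (rev xs)"
  unfolding is_path_def path_edges_def by (auto simp: path_edge_list_rev)

lemma incident_edges_rev: "incident_edges E (rev xs) = incident_edges E xs"
  unfolding incident_edges_def path_edges_def by (simp add: path_edge_list_rev)

lemma q_path_rev: "q_path q e (rev xs) = q_path q e xs"
  unfolding q_path_def by simp

definition path_weight :: "'a set \<Rightarrow> 'a set set \<Rightarrow> ('a set \<Rightarrow> 'a \<Rightarrow> int) \<Rightarrow> 'a \<Rightarrow> 'a \<Rightarrow> int" where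
  "path_weight C E q v w =
     (\<Prod>\<epsilon>\<in>incident_edges E (tpath C E v w). q_path q \<epsilon> (tpath C E v w))"

lemma even_sum_off_diagonal:
  fixes h :: "'b \<Rightarrow> 'b \<Rightarrow> int"
  assumes "finite N" and "\<And>a b. a \<in> N \<Longrightarrow> b \<in> N \<Longrightarrow> h a b = h b a"
  shows "even (\<Sum>a\<in>N. \<Sum>b\<in>N - {a}. h a b)"
  using assms
proof (induction N rule: finite_induct)
  case empty
  then show ?case by simp
next
  case (insert x N)
  have row: "(\<Sum>b\<in>insert x N - {a}. h a b) = h x a + (\<Sum>b\<in>N - {a}. h a b)" if "a \<in> N" for a
  proof -
    have "insert x N - {a} = insert x (N - {a})" using that insert.hyps(2) by auto
    then show ?thesis using that insert by simp
  qed
  have "(\<Sum>a\<in>insert x N. \<Sum>b\<in>insert x N - {a}. h a b)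
      = (\<Sum>b\<in>N. h x b) + (\<Sum>a\<in>N. h x a + (\<Sum>b\<in>N - {a}. h a b))"
    using insert.hyps row by (simp add: insert_Diff_if)
  also have "\<dots> = 2 * (\<Sum>b\<in>N. h x b) + (\<Sum>a\<in>N. \<Sum>b\<in>N - {a}. h a b)"
    by (simp add: sum.distrib)
  finally show ?case using insert by simp
qed

lemma gcd_parity:
  fixes a b c :: int
  assumes "odd c"
  shows "even (gcd a b - (a * c + (1 + a) * b))"
  using assms by auto

lemma even_sum_gcd_minus:
  fixes f S :: "'b \<Rightarrow> int" and W :: "'b \<Rightarrow> 'b \<Rightarrow> int"
  assumes fin: "finite N"
    and sym: "\<And>\<alpha> \<beta>. \<alpha> \<in> N \<Longrightarrow> \<beta> \<in> N \<Longrightarrow> W \<alpha> \<beta> = W \<beta> \<alpha>"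
    and odd: "\<And>\<alpha>. \<alpha> \<in> N \<Longrightarrow> odd (S \<alpha> + (\<Sum>\<beta>\<in>N - {\<alpha>}. W \<alpha> \<beta>))"
  shows "even ((\<Sum>\<alpha>\<in>N. gcd (f \<alpha>) (\<Sum>\<beta>\<in>N - {\<alpha>}. f \<beta> * W \<alpha> \<beta>)) - (\<Sum>\<alpha>\<in>N. f \<alpha> * S \<alpha>))"
proof -
  define P where "P \<alpha> = (\<Sum>\<beta>\<in>N - {\<alpha>}. f \<beta> * W \<alpha> \<beta>)" for \<alpha>
  define R where "R \<alpha> = (\<Sum>\<beta>\<in>N - {\<alpha>}. W \<alpha> \<beta>)" for \<alpha>
  define h where "h \<alpha> \<beta> = (f \<alpha> + f \<beta> + f \<alpha> * f \<beta>) * W \<alpha> \<beta>" for \<alpha> \<beta>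
  have h_row: "f \<alpha> * R \<alpha> + (1 + f \<alpha>) * P \<alpha> = (\<Sum>\<beta>\<in>N - {\<alpha>}. h \<alpha> \<beta>)" for \<alpha>
    unfolding R_def P_def h_def
    by (simp add: sum_distrib_left sum.distrib[symmetric] algebra_simps)
  have "(\<Sum>\<alpha>\<in>N. gcd (f \<alpha>) (P \<alpha>)) - (\<Sum>\<alpha>\<in>N. f \<alpha> * S \<alpha>)
      = (\<Sum>\<alpha>\<in>N. gcd (f \<alpha>) (P \<alpha>) - (f \<alpha> * (S \<alpha> + R \<alpha>) + (1 + f \<alpha>) * P \<alpha>))
        + (\<Sum>\<alpha>\<in>N. \<Sum>\<beta>\<in>N - {\<alpha>}. h \<alpha> \<beta>)"
    by (simp only: h_row[symmetric]) (simp add: sum_subtractf sum.distrib[symmetric] algebra_simps)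
  moreover have "even (\<Sum>\<alpha>\<in>N. gcd (f \<alpha>) (P \<alpha>) - (f \<alpha> * (S \<alpha> + R \<alpha>) + (1 + f \<alpha>) * P \<alpha>))"
    using odd unfolding R_def by (intro dvd_sum gcd_parity) simp
  moreover have "even (\<Sum>\<alpha>\<in>N. \<Sum>\<beta>\<in>N - {\<alpha>}. h \<alpha> \<beta>)"
    using fin sym unfolding h_def by (intro even_sum_off_diagonal) (auto simp: algebra_simps)
  ultimately show ?thesis unfolding P_def by simp
qed

locale tree =
  fixes C :: "'a set" and E :: "'a set set"
  assumes is_tree: "is_tree C E"
begin

abbreviation \<gamma> :: "'a \<Rightarrow> 'a \<Rightarrow> 'a list" where
  "\<gamma> x y \<equiv> tpath C E x y"

lemma is_graph: "is_graph C E"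
  using is_tree unfolding is_tree_def by auto

lemma finite_cells: "finite C"
  and finite_edges: "finite E"
  and edge_subset: "e \<in> E \<Longrightarrow> e \<subseteq> C"
  and card_edge: "e \<in> E \<Longrightarrow> card e = 2"
  using is_graph unfolding is_graph_def by auto

lemma edge_other_end:
  assumes "e \<in> E" "u \<in> e"
  obtains w where "e = {u, w}" "u \<noteq> w" "w \<in> C"
proof -
  obtain a b where "e = {a, b}" "a \<noteq> b"
    using card_edge[OF assms(1)] by (meson card_2_iff)
  then show ?thesis using that assms edge_subset[OF assms(1)] by auto
qed

lemma tpath:
  assumes "x \<in> C" "y \<in> C"
  shows "is_path C E (\<gamma> x y) \<and> hd (\<gamma> x y) = x \<and> last (\<gamma> x y) = y"
proof -
  have "\<exists>!xs. is_path C E xs \<and> hd xs = x \<and> last xs = y"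
    using is_tree assms unfolding is_tree_def by auto
  then show ?thesis unfolding tpath_def by (rule theI')
qed

lemma tpath_unique:
  assumes "is_path C E xs"
  shows "\<gamma> (hd xs) (last xs) = xs"
proof -
  have "xs \<noteq> []" "set xs \<subseteq> C" using assms unfolding is_path_def by auto
  then have "hd xs \<in> C" "last xs \<in> C" by auto
  then have "\<exists>!ys. is_path C E ys \<and> hd ys = hd xs \<and> last ys = last xs"
    using is_tree unfolding is_tree_def by auto
  then show ?thesis unfolding tpath_def using assms by (simp add: the1_equality)
qed

lemma tpath_not_Nil: "x \<in> C \<Longrightarrow> y \<in> C \<Longrightarrow> \<gamma> x y \<noteq> []"
  and set_tpath_subset: "x \<in> C \<Longrightarrow> y \<in> C \<Longrightarrow> set (\<gamma> x y) \<subseteq> C"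
  and path_edges_tpath_subset: "x \<in> C \<Longrightarrow> y \<in> C \<Longrightarrow> path_edges (\<gamma> x y) \<subseteq> E"
  using tpath unfolding is_path_def by auto

lemma tpath_eq_Cons: "x \<in> C \<Longrightarrow> y \<in> C \<Longrightarrow> \<gamma> x y = x # tl (\<gamma> x y)"
  using tpath tpath_not_Nil by (metis list.collapse)

lemma tpath_same [simp]: "x \<in> C \<Longrightarrow> \<gamma> x x = [x]"
  using tpath_unique[of "[x]"] unfolding is_path_def path_edges_def by auto

lemma tpath_drop:
  assumes "x \<in> C" "y \<in> C" "i < length (\<gamma> x y)"
  shows "\<gamma> (\<gamma> x y ! i) y = drop i (\<gamma> x y)"
proof -
  have "is_path C E (drop i (\<gamma> x y))" using is_path_drop tpath[OF assms(1,2)] assms(3) by blast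
  from tpath_unique[OF this] show ?thesis using tpath[OF assms(1,2)] assms(3)
    by (simp add: hd_drop_conv_nth)
qed

lemma tpath_swap:
  assumes "x \<in> C" "y \<in> C"
  shows "\<gamma> y x = rev (\<gamma> x y)"
  using tpath_unique[OF is_path_rev[of C E "\<gamma> x y"]] tpath[OF assms] tpath_not_Nil[OF assms]
  by (simp add: hd_rev last_rev)

lemma nth_tpath_neq_start:
  assumes "x \<in> C" "y \<in> C" "0 < k" "k < length (\<gamma> x y)"
  shows "\<gamma> x y ! k \<noteq> x"
proof
  assume "\<gamma> x y ! k = x"
  then have "length (\<gamma> x y) = length (drop k (\<gamma> x y))"
    using tpath_drop[OF assms(1,2,4)] by simp
  then show False using assms by simp
qed

lemma start_notin_tl_tpath:
  assumes "x \<in> C" "y \<in> C"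
  shows "x \<notin> set (tl (\<gamma> x y))"
proof
  assume "x \<in> set (tl (\<gamma> x y))"
  then obtain j where "j < length (tl (\<gamma> x y))" "tl (\<gamma> x y) ! j = x"
    by (auto simp: in_set_conv_nth)
  then show False
    using nth_tpath_neq_start[OF assms, of "Suc j"] tpath_eq_Cons[OF assms]
    by (metis length_Cons not_less_eq nth_Cons_Suc zero_less_Suc)
qed

lemma tpath_edge_cases:
  assumes ab: "{a, b} \<in> E" "a \<noteq> b" and r: "r \<in> C"
  shows "\<gamma> b r = b # \<gamma> a r \<or> \<gamma> a r = a # \<gamma> b r"
proof -
  have aC: "a \<in> C" and bC: "b \<in> C" using edge_subset[OF ab(1)] by auto
  define g where "g = \<gamma> a r"
  have g: "is_path C E g" "hd g = a" "last g = r" "g = a # tl g"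
    using tpath[OF aC r] tpath_eq_Cons[OF aC r] unfolding g_def by auto
  show ?thesis
  proof (cases "{a, b} \<in> path_edges g")
    case False
    have "path_edge_list (b # g) = {b, a} # path_edge_list g"
      using g(4) path_edge_list_Cons_Cons[of b a "tl g"] by simp
    then have "is_path C E (b # g)"
      using g(1) False bC ab(1) unfolding is_path_def path_edges_def by (auto simp: insert_commute)
    from tpath_unique[OF this] show ?thesis using g unfolding g_def
      by (metis last_ConsR list.discI list.sel(1))
  next
    case True
    then obtain i where i: "Suc i < length g" "{a, b} = {g ! i, g ! Suc i}"
      unfolding path_edges_iff_nth by auto
    have "g ! Suc i \<noteq> a" using nth_tpath_neq_start[OF aC r, of "Suc i"] i(1) g_def by simp
    then have gi: "g ! Suc i = b" "g ! i = a" using i(2) ab(2) by (auto simp: doubleton_eq_iff)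
    then have "i = 0" using nth_tpath_neq_start[OF aC r, of i] i(1) g_def by auto
    then have "\<gamma> b r = drop 1 g" using tpath_drop[OF aC r, of 1] gi i(1) g_def by simp
    then show ?thesis using g(4) unfolding g_def by (simp add: drop_Suc)
  qed
qed

text \<open>An edge off a tree path meets it in at most one cell: otherwise the two cells would be
  consecutive on the path and the edge would lie on it.\<close>

lemma incident_cell_unique:
  assumes x: "x \<in> C" and y: "y \<in> C" and e: "e \<in> E" "e \<notin> path_edges (\<gamma> x y)"
    and u: "u \<in> set (\<gamma> x y)" "u \<in> e" and u': "u' \<in> set (\<gamma> x y)" "u' \<in> e"
  shows "u = u'"
proof (rule ccontr)
  assume ne: "u \<noteq> u'"
  define g where "g = \<gamma> x y"
  have ee: "e = {u, u'}" using card_edge[OF e(1)] u(2) u'(2) ne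
    by (metis card_2_iff doubleton_eq_iff insertE singletonD)
  obtain i where i: "i < length g" "g ! i = u" using u(1) g_def by (auto simp: in_set_conv_nth)
  obtain j where j: "j < length g" "g ! j = u'" using u'(1) g_def by (auto simp: in_set_conv_nth)
  have di: "\<gamma> u y = drop i g" and dj: "\<gamma> u' y = drop j g"
    using tpath_drop[OF x y] i j g_def by auto
  from tpath_edge_cases[of u u' y] ee e(1) ne y
  consider "\<gamma> u' y = u' # \<gamma> u y" | "\<gamma> u y = u # \<gamma> u' y" by auto
  then show False
  proof cases
    case 1
    then have "length (drop j g) = length (u' # drop i g)" using di dj by simp
    then have "i = Suc j" using i j by simp
    then show False using nth_edge_in_path_edges[of j g] e(2) ee i j g_def by (simp add: insert_commute)
  next
    case 2
    then have "length (drop i g) = length (u # drop j g)" using di dj by simp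
    then have "j = Suc i" using i j by simp
    then show False using nth_edge_in_path_edges[of i g] e(2) ee i j g_def by simp
  qed
qed

lemma q_path_tpath:
  assumes "x \<in> C" "y \<in> C" "e \<in> E" "e \<notin> path_edges (\<gamma> x y)" "u \<in> set (\<gamma> x y)" "u \<in> e"
  shows "q_path q e (\<gamma> x y) = q e u"
  unfolding q_path_def
proof (rule arg_cong[where f = "q e"], rule the_equality)
  show "u \<in> set (\<gamma> x y) \<and> u \<in> e" using assms(5,6) ..
  show "u' = u" if "u' \<in> set (\<gamma> x y) \<and> u' \<in> e" for u'
    using incident_cell_unique[OF assms(1-4)] that assms(5,6) by blast
qed

lemma path_weight_sym:
  assumes "v \<in> C" "w \<in> C"
  shows "path_weight C E q v w = path_weight C E q w v"
  unfolding path_weight_def tpath_swap[OF assms] incident_edges_rev q_path_rev ..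

end

text \<open>The hypotheses on q are those a decorated tree satisfies at an arrow r: the edge at r
  has an odd decoration there, and the gcd condition leaves at most one even decoration per cell.\<close>

locale rooted_tree = tree +
  fixes r :: 'a and q :: "'a set \<Rightarrow> 'a \<Rightarrow> int"
  assumes root_in_cells: "r \<in> C"
    and odd_at_root: "\<And>e. e \<in> E \<Longrightarrow> r \<in> e \<Longrightarrow> odd (q e r)"
    and at_most_one_even: "\<And>v e e'. v \<in> C \<Longrightarrow> e \<in> E \<Longrightarrow> e' \<in> E \<Longrightarrow> v \<in> e \<Longrightarrow> v \<in> e'
       \<Longrightarrow> e \<noteq> e' \<Longrightarrow> even (q e v) \<Longrightarrow> odd (q e' v)"
begin

definition odd_off_path :: "'a list \<Rightarrow> 'a \<Rightarrow> bool" where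
  "odd_off_path g u \<longleftrightarrow> (\<forall>\<epsilon>\<in>E. u \<in> \<epsilon> \<and> \<epsilon> \<notin> path_edges g \<longrightarrow> odd (q \<epsilon> u))"

definition odd_path :: "'a \<Rightarrow> bool" where
  "odd_path v \<longleftrightarrow> (\<forall>u\<in>set (\<gamma> v r). odd_off_path (\<gamma> v r) u)"

definition odd_tail :: "'a \<Rightarrow> bool" where
  "odd_tail v \<longleftrightarrow> (\<forall>u\<in>set (tl (\<gamma> v r)). odd_off_path (\<gamma> v r) u)"

definition children :: "'a \<Rightarrow> 'a set" where
  "children v = {c \<in> C. \<gamma> c r = c # \<gamma> v r}"

lemma odd_path_iff_odd_tail:
  assumes "v \<in> C"
  shows "odd_path v \<longleftrightarrow> odd_tail v \<and> odd_off_path (\<gamma> v r) v"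
proof -
  have "set (\<gamma> v r) = insert v (set (tl (\<gamma> v r)))"
    using tpath_eq_Cons[OF assms root_in_cells] by (metis list.simps(15))
  then show ?thesis unfolding odd_path_def odd_tail_def by auto
qed

lemma odd_tail_root: "odd_tail r"
  unfolding odd_tail_def using root_in_cells by simp

lemma child_tpath:
  assumes "c \<in> children v"
  shows "c \<in> C" "\<gamma> c r = c # \<gamma> v r"
  using assms unfolding children_def by auto

lemma child_notin_tpath:
  assumes "v \<in> C" "c \<in> children v"
  shows "c \<notin> set (\<gamma> v r)" "c \<noteq> v"
proof -
  show "c \<notin> set (\<gamma> v r)"
    using start_notin_tl_tpath[OF child_tpath(1)[OF assms(2)] root_in_cells] child_tpath[OF assms(2)]
    by simp
  then show "c \<noteq> v" using tpath_eq_Cons[OF assms(1) root_in_cells] by (metis list.set_intros(1))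
qed

lemma path_edges_child:
  assumes "v \<in> C" "c \<in> children v"
  shows "path_edges (\<gamma> c r) = insert {c, v} (path_edges (\<gamma> v r))"
  using child_tpath(2)[OF assms(2)] tpath_eq_Cons[OF assms(1) root_in_cells] path_edges_Cons_Cons
  by metis

lemma child_edge:
  assumes "v \<in> C" "c \<in> children v"
  shows "{v, c} \<in> E"
  using path_edges_child[OF assms] path_edges_tpath_subset[OF child_tpath(1)[OF assms(2)] root_in_cells]
  by (auto simp: insert_commute)

lemma inj_on_child_edge: "v \<in> C \<Longrightarrow> inj_on (\<lambda>c. {v, c}) (children v)"
  unfolding inj_on_def using child_notin_tpath by (metis doubleton_eq_iff)

lemma parent_edge:
  assumes "v \<in> C" "v \<noteq> r"
  shows "Suc 0 < length (\<gamma> v r)" "{v, \<gamma> v r ! 1} \<in> path_edges (\<gamma> v r)" "{v, \<gamma> v r ! 1} \<in> E"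
    "\<gamma> v r ! 1 \<in> C" "\<gamma> (\<gamma> v r ! 1) r = tl (\<gamma> v r)"
proof -
  note vr = assms(1) root_in_cells
  have ends: "hd (\<gamma> v r) = v" "last (\<gamma> v r) = r" using tpath[OF vr] by auto
  show len: "Suc 0 < length (\<gamma> v r)"
  proof (rule ccontr)
    assume "\<not> Suc 0 < length (\<gamma> v r)"
    then have "length (\<gamma> v r) = 1" using tpath_not_Nil[OF vr] by (cases "\<gamma> v r") auto
    then have "hd (\<gamma> v r) = last (\<gamma> v r)" by (cases "\<gamma> v r") auto
    then show False using ends assms by simp
  qed
  show "{v, \<gamma> v r ! 1} \<in> path_edges (\<gamma> v r)"
    using nth_edge_in_path_edges[OF len] ends tpath_not_Nil[OF vr] by (simp add: hd_conv_nth)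
  then show "{v, \<gamma> v r ! 1} \<in> E" using path_edges_tpath_subset[OF vr] by auto
  show "\<gamma> v r ! 1 \<in> C" using set_tpath_subset[OF vr] len by auto
  show "\<gamma> (\<gamma> v r ! 1) r = tl (\<gamma> v r)" using tpath_drop[OF vr, of 1] len by (simp add: drop_Suc)
qed

lemma path_edge_at_start:
  assumes "v \<in> C" "\<epsilon> \<in> path_edges (\<gamma> v r)" "v \<in> \<epsilon>"
  shows "v \<noteq> r \<and> \<epsilon> = {v, \<gamma> v r ! 1}"
proof -
  note vr = assms(1) root_in_cells
  obtain i where i: "Suc i < length (\<gamma> v r)" "\<epsilon> = {\<gamma> v r ! i, \<gamma> v r ! Suc i}"
    using assms(2) unfolding path_edges_iff_nth by auto
  have "\<gamma> v r ! Suc i \<noteq> v" using nth_tpath_neq_start[OF vr, of "Suc i"] i by simp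
  then have "\<gamma> v r ! i = v" using i assms(3) by auto
  then have "i = 0" using nth_tpath_neq_start[OF vr, of i] i by (cases i) auto
  moreover have "v \<noteq> r" using i root_in_cells by (cases "v = r") auto
  ultimately show ?thesis using i \<open>\<gamma> v r ! i = v\<close> by simp
qed

lemma edges_off_tpath_at_start:
  assumes v: "v \<in> C"
  shows "{\<epsilon> \<in> E. v \<in> \<epsilon> \<and> \<epsilon> \<notin> path_edges (\<gamma> v r)} = (\<lambda>c. {v, c}) ` children v"
proof (intro set_eqI iffI)
  fix \<epsilon> assume "\<epsilon> \<in> {\<epsilon> \<in> E. v \<in> \<epsilon> \<and> \<epsilon> \<notin> path_edges (\<gamma> v r)}"
  then have e: "\<epsilon> \<in> E" "v \<in> \<epsilon>" "\<epsilon> \<notin> path_edges (\<gamma> v r)" by auto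
  obtain c where c: "\<epsilon> = {v, c}" "v \<noteq> c" "c \<in> C" using edge_other_end[OF e(1,2)] by blast
  have "\<gamma> v r \<noteq> v # \<gamma> c r"
  proof
    assume "\<gamma> v r = v # \<gamma> c r"
    then have "{v, c} \<in> path_edges (\<gamma> v r)"
      using path_edges_Cons_Cons tpath_eq_Cons[OF c(3) root_in_cells] by (metis insertI1)
    then show False using e(3) c by simp
  qed
  then have "c \<in> children v"
    using tpath_edge_cases[of v c r] e(1) c root_in_cells unfolding children_def by auto
  then show "\<epsilon> \<in> (\<lambda>c. {v, c}) ` children v" using c by auto
next
  fix \<epsilon> assume "\<epsilon> \<in> (\<lambda>c. {v, c}) ` children v"
  then obtain c where c: "c \<in> children v" "\<epsilon> = {v, c}" by auto
  have "\<epsilon> \<notin> path_edges (\<gamma> v r)"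
    using in_set_if_in_path_edge[of \<epsilon> "\<gamma> v r" c] child_notin_tpath[OF v c(1)] c by auto
  then show "\<epsilon> \<in> {\<epsilon> \<in> E. v \<in> \<epsilon> \<and> \<epsilon> \<notin> path_edges (\<gamma> v r)}" using child_edge[OF v c(1)] c by auto
qed

lemma odd_off_path_start_iff:
  assumes "v \<in> C"
  shows "odd_off_path (\<gamma> v r) v \<longleftrightarrow> (\<forall>c\<in>children v. odd (q {v, c} v))"
proof -
  have "odd_off_path (\<gamma> v r) v \<longleftrightarrow>
      (\<forall>\<epsilon>\<in>{\<epsilon> \<in> E. v \<in> \<epsilon> \<and> \<epsilon> \<notin> path_edges (\<gamma> v r)}. odd (q \<epsilon> v))"
    unfolding odd_off_path_def by auto
  then show ?thesis unfolding edges_off_tpath_at_start[OF assms] by auto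
qed

lemma odd_tail_child_iff:
  assumes v: "v \<in> C" and c: "c \<in> children v"
  shows "odd_tail c \<longleftrightarrow> odd_tail v \<and> (\<forall>c'\<in>children v. c' \<noteq> c \<longrightarrow> odd (q {v, c'} v))"
proof -
  note gc = child_tpath[OF c] and gv = tpath_eq_Cons[OF v root_in_cells]
  note pe = path_edges_child[OF v c]
  have cn: "c \<notin> set (\<gamma> v r)" "c \<noteq> v" using child_notin_tpath[OF v c] by auto
  have tail: "odd_off_path (\<gamma> c r) u \<longleftrightarrow> odd_off_path (\<gamma> v r) u" if "u \<in> set (tl (\<gamma> v r))" for u
  proof -
    have "u \<noteq> v" using that start_notin_tl_tpath[OF v root_in_cells] by auto
    moreover have "u \<noteq> c" using that cn gv by (metis list.set_intros(2))
    ultimately show ?thesis unfolding odd_off_path_def pe by auto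
  qed
  have "odd_off_path (\<gamma> c r) v \<longleftrightarrow>
      (\<forall>\<epsilon>\<in>{\<epsilon> \<in> E. v \<in> \<epsilon> \<and> \<epsilon> \<notin> path_edges (\<gamma> v r)}. \<epsilon> \<noteq> {c, v} \<longrightarrow> odd (q \<epsilon> v))"
    unfolding odd_off_path_def pe by auto
  also have "\<dots> \<longleftrightarrow> (\<forall>c'\<in>children v. {v, c'} \<noteq> {c, v} \<longrightarrow> odd (q {v, c'} v))"
    unfolding edges_off_tpath_at_start[OF v] by auto
  also have "\<dots> \<longleftrightarrow> (\<forall>c'\<in>children v. c' \<noteq> c \<longrightarrow> odd (q {v, c'} v))"
    using child_notin_tpath[OF v] cn by (metis doubleton_eq_iff)
  finally have start: "odd_off_path (\<gamma> c r) v \<longleftrightarrow> \<dots>" .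
  have "odd_tail c \<longleftrightarrow> (\<forall>u\<in>set (\<gamma> v r). odd_off_path (\<gamma> c r) u)"
    unfolding odd_tail_def gc by simp
  also have "\<dots> \<longleftrightarrow> (\<forall>u\<in>set (tl (\<gamma> v r)). odd_off_path (\<gamma> c r) u) \<and> odd_off_path (\<gamma> c r) v"
    by (subst gv) auto
  finally show ?thesis using tail start unfolding odd_tail_def by auto
qed

lemma valency_eq_card_children:
  assumes v: "v \<in> C"
  shows "valency E v = card (children v) + (if v = r then 0 else 1)"
proof -
  let ?I = "{\<epsilon> \<in> E. v \<in> \<epsilon> \<and> \<epsilon> \<notin> path_edges (\<gamma> v r)}"
  have card_I: "card ?I = card (children v)"
    unfolding edges_off_tpath_at_start[OF v] using card_image[OF inj_on_child_edge[OF v]] .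
  show ?thesis
  proof (cases "v = r")
    case True
    then have "{e \<in> E. v \<in> e} = ?I" using path_edge_at_start[OF v] by blast
    then show ?thesis unfolding valency_def using card_I True by simp
  next
    case False
    then have "{e \<in> E. v \<in> e} = insert {v, \<gamma> v r ! 1} ?I" "{v, \<gamma> v r ! 1} \<notin> ?I"
      using path_edge_at_start[OF v] parent_edge[OF v] by blast+
    moreover have "finite ?I" using finite_edges by auto
    ultimately show ?thesis unfolding valency_def using card_I False by simp
  qed
qed

lemma Union_children: "(\<Union>v\<in>C. children v) = C - {r}"
proof (intro set_eqI iffI)
  fix c assume "c \<in> (\<Union>v\<in>C. children v)"
  then obtain v where v: "v \<in> C" "c \<in> children v" by auto
  then have "\<gamma> c r \<noteq> [r]" using child_tpath[OF v(2)] tpath_not_Nil[OF v(1) root_in_cells] by simp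
  then show "c \<in> C - {r}" using child_tpath[OF v(2)] root_in_cells by auto
next
  fix c assume c: "c \<in> C - {r}"
  then have "\<gamma> c r = c # \<gamma> (\<gamma> c r ! 1) r"
    using parent_edge(5) tpath_eq_Cons root_in_cells by auto
  then show "c \<in> (\<Union>v\<in>C. children v)" using c parent_edge(4)[of c] unfolding children_def by auto
qed

lemma children_disjoint:
  assumes "v \<in> C" "w \<in> C" "v \<noteq> w"
  shows "children v \<inter> children w = {}"
proof (rule ccontr)
  assume "children v \<inter> children w \<noteq> {}"
  then obtain c where "c \<in> children v" "c \<in> children w" by auto
  then have "hd (\<gamma> v r) = hd (\<gamma> w r)" using child_tpath(2) by (metis list.inject)
  then show False using tpath assms root_in_cells by metis
qed

lemma sum_card_odd_tail_children:
  "(\<Sum>v\<in>C. card {c \<in> children v. odd_tail c}) = card {c \<in> C - {r}. odd_tail c}"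
proof -
  have "(\<Sum>v\<in>C. card {c \<in> children v. odd_tail c}) = card (\<Union>v\<in>C. {c \<in> children v. odd_tail c})"
    using children_disjoint finite_subset[OF _ finite_cells] child_tpath(1)
    by (intro card_UN_disjoint[symmetric]) (auto simp: finite_cells subset_eq)
  also have "(\<Union>v\<in>C. {c \<in> children v. odd_tail c}) = {c \<in> C - {r}. odd_tail c}"
    using Union_children by blast
  finally show ?thesis .
qed

text \<open>At most one child edge of v is even at v, and it is never at the root; if there is one,
  exactly the child across it inherits an odd tail, otherwise all children do.\<close>

lemma even_local_count:
  assumes v: "v \<in> C"
  shows "even (valency E v * of_bool (odd_path v) + of_bool (v \<noteq> r \<and> odd_tail v)
     + card {c \<in> children v. odd_tail c})"
proof (cases "odd_tail v")
  case False
  then have "v \<noteq> r" "\<not> odd_path v" and none: "{c \<in> children v. odd_tail c} = {}"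
    using odd_tail_root odd_path_iff_odd_tail[OF v] odd_tail_child_iff[OF v] by auto
  then show ?thesis using False by (simp only: none card.empty) simp
next
  case True
  show ?thesis
  proof (cases "\<forall>c\<in>children v. odd (q {v, c} v)")
    case True2: True
    then have "odd_path v" "{c \<in> children v. odd_tail c} = children v"
      using odd_path_iff_odd_tail[OF v] odd_off_path_start_iff[OF v] odd_tail_child_iff[OF v] True
      by auto
    then show ?thesis using valency_eq_card_children[OF v] True by simp
  next
    case False
    then obtain c0 where c0: "c0 \<in> children v" "even (q {v, c0} v)" by auto
    have e0: "{v, c0} \<in> E" using child_edge[OF v c0(1)] .
    have others_odd: "odd (q {v, c} v)" if "c \<in> children v" "c \<noteq> c0" for c
    proof -
      have "{v, c0} \<noteq> {v, c}" using that child_notin_tpath[OF v] c0(1) by (metis doubleton_eq_iff)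
      then show ?thesis using at_most_one_even[OF v e0 child_edge[OF v that(1)]] c0(2) by auto
    qed
    have "v \<noteq> r" using odd_at_root[OF e0] c0(2) by auto
    moreover have "\<not> odd_path v" using odd_path_iff_odd_tail[OF v] odd_off_path_start_iff[OF v] c0 by auto
    moreover have "{c \<in> children v. odd_tail c} = {c0}"
      using odd_tail_child_iff[OF v] True c0 others_odd by auto
    ultimately show ?thesis using True by simp
  qed
qed

lemma even_sum_valency_odd_path: "even (\<Sum>v\<in>C. valency E v * of_bool (odd_path v))"
proof -
  let ?K = "card {c \<in> C - {r}. odd_tail c}"
  have "(\<Sum>v\<in>C. of_bool (v \<noteq> r \<and> odd_tail v)) = ?K"
    using finite_cells by simp (rule arg_cong[where f = card], blast)
  then have "(\<Sum>v\<in>C. valency E v * of_bool (odd_path v) + of_bool (v \<noteq> r \<and> odd_tail v)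
      + card {c \<in> children v. odd_tail c}) = (\<Sum>v\<in>C. valency E v * of_bool (odd_path v)) + 2 * ?K"
    by (simp only: sum.distrib sum_card_odd_tail_children)
  moreover have "even (\<Sum>v\<in>C. valency E v * of_bool (odd_path v) + of_bool (v \<noteq> r \<and> odd_tail v)
      + card {c \<in> children v. odd_tail c})"
    using even_local_count by (rule dvd_sum)
  ultimately show ?thesis by simp
qed

lemma odd_weight_iff_odd_path:
  assumes v: "v \<in> C"
  shows "odd (path_weight C E q v r) \<longleftrightarrow> odd_path v"
proof -
  let ?g = "\<gamma> v r"
  have "finite (incident_edges E ?g)" unfolding incident_edges_def using finite_edges by auto
  then have "odd (path_weight C E q v r) \<longleftrightarrow> (\<forall>\<epsilon>\<in>incident_edges E ?g. odd (q_path q \<epsilon> ?g))"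
    unfolding path_weight_def by (simp add: even_prod_iff)
  also have "\<dots> \<longleftrightarrow> (\<forall>\<epsilon>\<in>incident_edges E ?g. \<forall>u\<in>set ?g. u \<in> \<epsilon> \<longrightarrow> odd (q \<epsilon> u))"
  proof (intro ball_cong refl)
    fix \<epsilon> assume "\<epsilon> \<in> incident_edges E ?g"
    then obtain u where "\<epsilon> \<in> E" "\<epsilon> \<notin> path_edges ?g" "u \<in> set ?g" "u \<in> \<epsilon>"
      unfolding incident_edges_def by blast
    with q_path_tpath[OF v root_in_cells] show "odd (q_path q \<epsilon> ?g) \<longleftrightarrow> (\<forall>u\<in>set ?g. u \<in> \<epsilon> \<longrightarrow> odd (q \<epsilon> u))"
      by metis
  qed
  also have "\<dots> \<longleftrightarrow> odd_path v" unfolding odd_path_def odd_off_path_def incident_edges_def by blast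
  finally show ?thesis .
qed

lemma odd_sum_valency_weight:
  assumes "odd (valency E r)"
  shows "odd (\<Sum>v\<in>C - {r}. int (valency E v) * path_weight C E q v r)"
proof -
  have "even (int (valency E v) * path_weight C E q v r - int (valency E v * of_bool (odd_path v)))"
    if "v \<in> C" for v
    using odd_weight_iff_odd_path[OF that] by (cases "odd_path v") auto
  then have "even (\<Sum>v\<in>C. int (valency E v) * path_weight C E q v r - int (valency E v * of_bool (odd_path v)))"
    by (rule dvd_sum)
  moreover have "even (\<Sum>v\<in>C. int (valency E v * of_bool (odd_path v)))"
    using even_sum_valency_odd_path by (simp only: of_nat_sum[symmetric] even_of_nat)
  ultimately have "even (\<Sum>v\<in>C. int (valency E v) * path_weight C E q v r)"
    by (simp add: sum_subtractf)
  moreover have "odd_path r"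
    using odd_path_iff_odd_tail odd_tail_root odd_off_path_start_iff child_edge odd_at_root root_in_cells
    by auto
  then have "odd (path_weight C E q r r)" using odd_weight_iff_odd_path root_in_cells by simp
  ultimately show ?thesis
    using assms sum.remove[OF finite_cells root_in_cells, of "\<lambda>v. int (valency E v) * path_weight C E q v r"]
    by simp
qed

end

locale decorated =
  fixes V A :: "'a set" and E :: "'a set set" and f :: "'a \<Rightarrow> int"
    and q :: "'a set \<Rightarrow> 'a \<Rightarrow> int"
  assumes decorated_tree: "decorated_tree V A E f q"
begin

sublocale tree "V \<union> A" E
  using decorated_tree unfolding decorated_tree_def by unfold_locales auto

abbreviation w :: "'a \<Rightarrow> 'a \<Rightarrow> int" where
  "w v \<alpha> \<equiv> path_weight (V \<union> A) E q v \<alpha>"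

abbreviation A\<^sub>1 :: "'a set" where
  "A\<^sub>1 \<equiv> A - A0 A f"

lemma finite_V: "finite V"
  and finite_A: "finite A"
  and V_A_disjoint: "V \<inter> A = {}"
  and valency_arrow: "\<alpha> \<in> A \<Longrightarrow> valency E \<alpha> = 1"
  and q_at_arrow: "e \<in> E \<Longrightarrow> \<alpha> \<in> A \<Longrightarrow> \<alpha> \<in> e \<Longrightarrow> q e \<alpha> = 1"
  and coprime_decorations: "v \<in> V \<Longrightarrow> e \<in> E \<Longrightarrow> e' \<in> E \<Longrightarrow> v \<in> e \<Longrightarrow> v \<in> e' \<Longrightarrow> e \<noteq> e'
    \<Longrightarrow> gcd (q e v) (q e' v) = 1"
  using decorated_tree unfolding decorated_tree_def by auto

lemma rooted_at_arrow:
  assumes "\<alpha> \<in> A"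
  shows "rooted_tree (V \<union> A) E \<alpha> q"
proof unfold_locales
  show "\<alpha> \<in> V \<union> A" using assms by simp
  show "odd (q e \<alpha>)" if "e \<in> E" "\<alpha> \<in> e" for e
    using q_at_arrow[OF that(1) assms that(2)] by simp
  show "odd (q e' v)" if "v \<in> V \<union> A" "e \<in> E" "e' \<in> E" "v \<in> e" "v \<in> e'" "e \<noteq> e'" "even (q e v)"
    for v e e'
  proof (cases "v \<in> A")
    case True
    then show ?thesis using q_at_arrow[OF that(3) True that(5)] by simp
  next
    case False
    then have "gcd (q e v) (q e' v) = 1" using coprime_decorations that by blast
    then show ?thesis using that(7) by (metis gcd_greatest_iff odd_one)
  qed
qed

lemma odd_sum_weight_arrow:
  assumes "\<alpha> \<in> A\<^sub>1"
  shows "odd ((\<Sum>v\<in>V \<union> A0 A f. int (valency E v) * w v \<alpha>) + (\<Sum>\<beta>\<in>A\<^sub>1 - {\<alpha>}. w \<alpha> \<beta>))"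
proof -
  have \<alpha>: "\<alpha> \<in> A" using assms by simp
  interpret rooted_tree "V \<union> A" E \<alpha> q using rooted_at_arrow[OF \<alpha>] .
  have "(V \<union> A) - {\<alpha>} = (V \<union> A0 A f) \<union> (A\<^sub>1 - {\<alpha>})" "(V \<union> A0 A f) \<inter> (A\<^sub>1 - {\<alpha>}) = {}"
    using assms V_A_disjoint unfolding A0_def by auto
  then have "(\<Sum>v\<in>(V \<union> A) - {\<alpha>}. int (valency E v) * w v \<alpha>)
      = (\<Sum>v\<in>V \<union> A0 A f. int (valency E v) * w v \<alpha>) + (\<Sum>\<beta>\<in>A\<^sub>1 - {\<alpha>}. int (valency E \<beta>) * w \<beta> \<alpha>)"
    using finite_V finite_A by (simp add: sum.union_disjoint A0_def)
  also have "(\<Sum>\<beta>\<in>A\<^sub>1 - {\<alpha>}. int (valency E \<beta>) * w \<beta> \<alpha>) = (\<Sum>\<beta>\<in>A\<^sub>1 - {\<alpha>}. w \<alpha> \<beta>)"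
    using valency_arrow path_weight_sym assms by (intro sum.cong) auto
  finally show ?thesis
    using odd_sum_valency_weight valency_arrow[OF \<alpha>] by simp
qed

lemma xval_eq: "xval V A E f q v \<alpha> = f \<alpha> * w v \<alpha>"
  unfolding xval_def path_weight_def Let_def ..

lemma arrow_edge_eq:
  assumes "\<alpha> \<in> A" "e \<in> E" "\<alpha> \<in> e"
  shows "arrow_edge E \<alpha> = e"
proof -
  obtain e0 where e0: "{e \<in> E. \<alpha> \<in> e} = {e0}"
    using valency_arrow[OF assms(1)] unfolding valency_def by (meson card_1_singletonE)
  show ?thesis unfolding arrow_edge_def
  proof (rule the_equality)
    show "e \<in> E \<and> \<alpha> \<in> e" using assms(2,3) ..
    show "e' = e" if "e' \<in> E \<and> \<alpha> \<in> e'" for e'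
      using that assms(2,3) e0 by (metis (mono_tags, lifting) mem_Collect_eq singletonD)
  qed
qed

lemma arrow_edge_in_tpath:
  assumes "\<alpha> \<in> A" "\<beta> \<in> A" "\<beta> \<noteq> \<alpha>"
  shows "arrow_edge E \<alpha> \<in> path_edges (\<gamma> \<alpha> \<beta>)"
proof -
  interpret rooted_tree "V \<union> A" E \<beta> q using rooted_at_arrow[OF assms(2)] .
  have "\<alpha> \<in> V \<union> A" "\<alpha> \<noteq> \<beta>" using assms by auto
  from parent_edge[OF this] show ?thesis using arrow_edge_eq[OF assms(1)] by simp
qed

text \<open>Between two arrows, the only edge at the start of the path lies on it, so the hat in
  xhat removes nothing.\<close>

lemma xhat_eq_xval:
  assumes "\<alpha> \<in> A" "\<beta> \<in> A" "\<beta> \<noteq> \<alpha>"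
  shows "xhat V A E f q \<alpha> \<beta> = xval V A E f q \<alpha> \<beta>"
proof -
  have "\<alpha> \<notin> \<epsilon>" if "\<epsilon> \<in> incident_edges E (\<gamma> \<alpha> \<beta>)" for \<epsilon>
  proof
    assume "\<alpha> \<in> \<epsilon>"
    moreover have "\<epsilon> \<in> E" "\<epsilon> \<notin> path_edges (\<gamma> \<alpha> \<beta>)"
      using that unfolding incident_edges_def by auto
    ultimately show False using arrow_edge_eq[OF assms(1)] arrow_edge_in_tpath[OF assms] by metis
  qed
  then have "{\<epsilon> \<in> incident_edges E (\<gamma> \<alpha> \<beta>). \<alpha> \<notin> \<epsilon>} = incident_edges E (\<gamma> \<alpha> \<beta>)" by blast
  then show ?thesis unfolding xhat_def xval_def Let_def by simp
qed

lemma pval_arrow_edge: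
  assumes "\<alpha> \<in> A"
  shows "pval V A E f q \<alpha> (arrow_edge E \<alpha>) = (\<Sum>\<beta>\<in>A\<^sub>1 - {\<alpha>}. f \<beta> * w \<alpha> \<beta>)"
proof -
  have "path_edges (\<gamma> \<alpha> \<alpha>) = {}"
    using assms unfolding path_edges_def by simp
  then have "{\<beta> \<in> A\<^sub>1. arrow_edge E \<alpha> \<in> path_edges (\<gamma> \<alpha> \<beta>)} = A\<^sub>1 - {\<alpha>}"
    using arrow_edge_in_tpath[OF assms] by blast
  moreover have "xhat V A E f q \<alpha> \<beta> = f \<beta> * w \<alpha> \<beta>" if "\<beta> \<in> A\<^sub>1 - {\<alpha>}" for \<beta>
    using that xhat_eq_xval[OF assms] xval_eq by simp
  ultimately show ?thesis unfolding pval_def by simp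
qed

lemma Mval_eq:
  "Mval V A E f q = 2 * (\<Sum>v\<in>V \<union> A0 A f. Nval V A E f q v)
     - (\<Sum>\<alpha>\<in>A\<^sub>1. f \<alpha> * (\<Sum>v\<in>V \<union> A0 A f. int (valency E v) * w v \<alpha>))"
proof -
  have "Mval V A E f q = 2 * (\<Sum>v\<in>V \<union> A0 A f. Nval V A E f q v)
      - (\<Sum>v\<in>V \<union> A0 A f. Nval V A E f q v * int (valency E v))"
    unfolding Mval_def by (simp add: algebra_simps sum_subtractf sum_distrib_left)
  also have "(\<Sum>v\<in>V \<union> A0 A f. Nval V A E f q v * int (valency E v))
      = (\<Sum>v\<in>V \<union> A0 A f. \<Sum>\<alpha>\<in>A\<^sub>1. f \<alpha> * (int (valency E v) * w v \<alpha>))"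
    unfolding Nval_def xval_eq sum_distrib_right by (simp only: ac_simps)
  also have "\<dots> = (\<Sum>\<alpha>\<in>A\<^sub>1. f \<alpha> * (\<Sum>v\<in>V \<union> A0 A f. int (valency E v) * w v \<alpha>))"
    by (subst sum.swap) (simp only: sum_distrib_left)
  finally show ?thesis .
qed

lemma Fval_eq: "Fval V A E f q = (\<Sum>\<alpha>\<in>A\<^sub>1. gcd (f \<alpha>) (\<Sum>\<beta>\<in>A\<^sub>1 - {\<alpha>}. f \<beta> * w \<alpha> \<beta>))"
  unfolding Fval_def Farrow_def by (intro sum.cong) (auto simp: pval_arrow_edge)

end

theorem theorem3p1:
  fixes V A :: "'a set" and E :: "'a set set" and f :: "'a \<Rightarrow> int"
    and q :: "'a set \<Rightarrow> 'a \<Rightarrow> int"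
  assumes "decorated_tree V A E f q"
  shows "even (Mval V A E f q + Fval V A E f q)"
proof -
  interpret decorated V A E f q using assms by unfold_locales
  have "even (Fval V A E f q
      - (\<Sum>\<alpha>\<in>A\<^sub>1. f \<alpha> * (\<Sum>v\<in>V \<union> A0 A f. int (valency E v) * w v \<alpha>)))"
    unfolding Fval_eq
    using finite_A path_weight_sym odd_sum_weight_arrow by (intro even_sum_gcd_minus) auto
  then show ?thesis unfolding Mval_eq by simp
qed

end
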